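(* Consider the sampling-based safety filter described in the context at time $t$. Let $\epsilon\in(0,1)$ and $\beta\in(0,1)$, and let the number of samples $N$ satisfy $$N\ge\frac{2}{\epsilon}\left(\ln\frac{1}{\beta}+1\right).$$ If the filter intervenes at time $t$ (i.e. $\mathbf{u}^{\mathrm{safe}}_t\ne\mathbf{u}^{\mathrm{nom}}_t$, meaning $\min_i C(\tau^i_{t+1})\ge0$), then, with probability at least $1-\beta$ over the draw of the $N$ i.i.d. samples, the probability that a control sequence $U_{t+1}\sim\tilde q_{t+1}$ yields a safe trajectory from $\mathbf{x}_{t+1}=f(\mathbf{x}_t,\mathbf{u}^{\mathrm{nom}}_t)$ is at most $\epsilon$: $$\Pr_{U_{t+1}\sim\tilde q_{t+1}}\left(\mathcal{O}_{\tau_{t+1}}=1\right)\le\epsilon.$$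
   Context: Consider a deterministic discrete-time system $\mathbf{x}_{t+1}=f(\mathbf{x}_t,\mathbf{u}_t)$ with states $\mathbf{x}_t\in\mathcal{X}$ and inputs $\mathbf{u}_t\in\mathcal{U}$. Let $l:\mathcal{X}\to\mathbb{R}$ be a level function and $\mathcal{L}=\{\mathbf{x}: l(\mathbf{x})\le 0\}$ the failure set. Fix a horizon $H\ge1$. For a state $\mathbf{x}$ and $U=(\mathbf{u}_0,\dots,\mathbf{u}_{H-1})\in\mathcal{U}^H$, the rollout is $\mathbf{x}^U_0=\mathbf{x}$, $\mathbf{x}^U_{k+1}=f(\mathbf{x}^U_k,\mathbf{u}_k)$, giving trajectory $\tau$. The safety indicator is $\mathcal{O}_\tau=1$ if $\mathbf{x}^U_k\notin\mathcal{L}$ for all $k\in\{0,\dots,H\}$ and $0$ otherwise; the cost is $C(\tau)=\max_{k\in\{0,\dots,H\}}\{-l(\mathbf{x}^U_k)\}$. For $U_{t+1}\in\mathcal{U}^H$, $\tau_{t+1}$ denotes its rollout from $\mathbf{x}_{t+1}=f(\mathbf{x}_t,\mathbf{u}^{\mathrm{nom}}_t)$. Safety filter at time $t$: given the current state $\mathbf{x}_t$, a nominal input $\mathbf{u}^{\mathrm{nom}}_t\in\mathcal{U}$ and a stored sequence $U^{\mathrm{safe}}_t=(\bar{\mathbf{u}}_t,\dots,\bar{\mathbf{u}}_{t+H-1})$, it computes $\mathbf{x}_{t+1}=f(\mathbf{x}_t,\mathbf{u}^{\mathrm{nom}}_t)$, draws $N$ control sequences $U^1_{t+1},\dots,U^N_{t+1}$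 independently from a sampling distribution $\tilde q_{t+1}$ on $\mathcal{U}^H$ (fixed before the draw), rolls each out from $\mathbf{x}_{t+1}$ to get $\tau^i_{t+1}$, and lets $i^*\in\arg\min_i C(\tau^i_{t+1})$. If $C(\tau^{i^*}_{t+1})<0$ it outputs $\mathbf{u}^{\mathrm{safe}}_t=\mathbf{u}^{\mathrm{nom}}_t$ and stores $U^{i^*}_{t+1}$; otherwise the filter intervenes, outputting $\mathbf{u}^{\mathrm{safe}}_t=\bar{\mathbf{u}}_t$ and storing the shifted sequence $(\bar{\mathbf{u}}_{t+1},\dots,\bar{\mathbf{u}}_{t+H-1},\mathbf{u}')$ for some appended input $\mathbf{u}'$. The notation $\mathbf{u}^{\mathrm{safe}}_t\ne\mathbf{u}^{\mathrm{nom}}_t$ means the filter intervenes. *)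

theory Defs
  imports "HOL-Probability.Probability"
begin

text \<open>Control sequences U = (u_0,...,u_{H-1}) are represented as functions
  nat => 'u; only the entries U 0, ..., U (H-1) are used by a rollout.\<close>

primrec rollout :: "('x \<Rightarrow> 'u \<Rightarrow> 'x) \<Rightarrow> 'x \<Rightarrow> (nat \<Rightarrow> 'u) \<Rightarrow> nat \<Rightarrow> 'x" where
  "rollout f x U 0 = x"
| "rollout f x U (Suc k) = f (rollout f x U k) (U k)"

definition safety_indicator :: "('x \<Rightarrow> 'u \<Rightarrow> 'x) \<Rightarrow> ('x \<Rightarrow> real) \<Rightarrow> nat \<Rightarrow> 'x \<Rightarrow> (nat \<Rightarrow> 'u) \<Rightarrow> nat" where
  "safety_indicator f l H x U =
     (if (\<forall>k\<in>{0..H}. rollout f x U k \<notin> {y. l y \<le> 0}) then 1 else 0)"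

definition traj_cost :: "('x \<Rightarrow> 'u \<Rightarrow> 'x) \<Rightarrow> ('x \<Rightarrow> real) \<Rightarrow> nat \<Rightarrow> 'x \<Rightarrow> (nat \<Rightarrow> 'u) \<Rightarrow> real" where
  "traj_cost f l H x U = Max ((\<lambda>k. - l (rollout f x U k)) ` {0..H})"

definition filter_intervenes ::
  "('x \<Rightarrow> 'u \<Rightarrow> 'x) \<Rightarrow> ('x \<Rightarrow> real) \<Rightarrow> nat \<Rightarrow> nat \<Rightarrow> 'x \<Rightarrow> 'u \<Rightarrow> (nat \<Rightarrow> nat \<Rightarrow> 'u) \<Rightarrow> bool" where
  "filter_intervenes f l H N xt unom Us =
     (Min ((\<lambda>i. traj_cost f l H (f xt unom) (Us i)) ` {..<N}) \<ge> 0)"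

end

theory Submission
  imports Defs
begin

text \<open>If the safe set of control sequences has probability \<open>p > \<epsilon>\<close>, then \<open>N\<close> independent
  samples all miss it with probability \<open>(1 - p)^N \<le> exp (- \<epsilon> N) \<le> \<beta>\<close>; and when the filter
  intervenes, no sample was safe. Only \<open>\<epsilon> N \<ge> ln (1/\<beta>)\<close> is needed, which the assumed
  bound on \<open>N\<close> more than guarantees.\<close>

lemma traj_cost_neg_iff_safe:
  "traj_cost f l H x U < 0 \<longleftrightarrow> safety_indicator f l H x U = 1"
proof -
  have "finite ((\<lambda>k. - l (rollout f x U k)) ` {0..H})"
    and "(\<lambda>k. - l (rollout f x U k)) ` {0..H} \<noteq> {}"
    by auto
  from Max_less_iff[OF this] show ?thesis
    unfolding traj_cost_def safety_indicator_def by (auto simp: not_less)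
qed

lemma filter_intervenes_iff_no_safe_sample:
  assumes "N > 0"
  shows "filter_intervenes f l H N xt unom Us \<longleftrightarrow>
           (\<forall>i<N. safety_indicator f l H (f xt unom) (Us i) \<noteq> 1)"
proof -
  have "finite ((\<lambda>i. traj_cost f l H (f xt unom) (Us i)) ` {..<N})"
    and "(\<lambda>i. traj_cost f l H (f xt unom) (Us i)) ` {..<N} \<noteq> {}"
    using assms by auto
  from Min_ge_iff[OF this, of 0] show ?thesis
    unfolding filter_intervenes_def
    using traj_cost_neg_iff_safe[of f l H "f xt unom"] by (auto simp: not_less[symmetric])
qed

lemma samples_miss_eq_PiE:
  "{Us \<in> space (PiM I (\<lambda>_. M)). \<forall>i\<in>I. Us i \<notin> S} = (\<Pi>\<^sub>E i\<in>I. space M - S)"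
  by (auto simp: space_PiM)

lemma (in prob_space) prob_all_samples_miss:
  assumes "finite I" and "S \<in> events"
  shows "measure (PiM I (\<lambda>_. M)) {Us \<in> space (PiM I (\<lambda>_. M)). \<forall>i\<in>I. Us i \<notin> S}
           = (1 - prob S) ^ card I"
proof -
  interpret P: finite_product_prob_space "\<lambda>_. M" I
    using assms(1) by unfold_locales
  have "P.prob (\<Pi>\<^sub>E i\<in>I. space M - S) = (\<Prod>i\<in>I. prob (space M - S))"
    using assms(2) by (intro P.prob_times) auto
  then show ?thesis
    using assms(2) by (simp add: samples_miss_eq_PiE prob_compl)
qed

lemma (in prob_space) prob_all_samples_miss_imp_prob_le:
  fixes \<beta> \<epsilon> :: real
  assumes "finite I" and "S \<in> events" and "0 < \<beta>" and "ln (1 / \<beta>) \<le> \<epsilon> * card I"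
  shows "measure (PiM I (\<lambda>_. M))
           {Us \<in> space (PiM I (\<lambda>_. M)). (\<forall>i\<in>I. Us i \<notin> S) \<longrightarrow> prob S \<le> \<epsilon>} \<ge> 1 - \<beta>"
proof (cases "prob S \<le> \<epsilon>")
  case True
  interpret P: prob_space "PiM I (\<lambda>_. M)"
    by (intro prob_space_PiM) (rule prob_space_axioms)
  show ?thesis
    using True \<open>0 < \<beta>\<close> by (simp add: P.prob_space)
next
  case False
  interpret P: finite_product_prob_space "\<lambda>_. M" I
    using assms(1) by unfold_locales
  let ?miss = "{Us \<in> space (PiM I (\<lambda>_. M)). \<forall>i\<in>I. Us i \<notin> S}"
  have "?miss \<in> P.events"
    unfolding samples_miss_eq_PiE using assms(1,2) by (intro sets_PiM_I_finite) auto
  have "P.prob ?miss = (1 - prob S) ^ card I"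
    using assms(1,2) by (rule prob_all_samples_miss)
  also have "\<dots> \<le> exp (- prob S) ^ card I"
    using exp_ge_add_one_self[of "- prob S"] by (intro power_mono) auto
  also have "\<dots> = exp (- (prob S * card I))"
    by (simp add: exp_of_nat_mult[symmetric])
  also have "\<dots> \<le> exp (- (\<epsilon> * card I))"
    using False by (simp add: mult_right_mono)
  also have "\<dots> \<le> \<beta>"
    using assms(3,4) exp_le_cancel_iff[of "- (\<epsilon> * card I)" "ln \<beta>"] by (simp add: ln_div)
  finally have "P.prob ?miss \<le> \<beta>" .
  moreover have "{Us \<in> space (PiM I (\<lambda>_. M)). (\<forall>i\<in>I. Us i \<notin> S) \<longrightarrow> prob S \<le> \<epsilon>}
                   = space (PiM I (\<lambda>_. M)) - ?miss"
    using False by auto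
  ultimately show ?thesis
    using P.prob_compl[OF \<open>?miss \<in> P.events\<close>] by simp
qed

theorem theorem1:
  fixes f :: "'x \<Rightarrow> 'u \<Rightarrow> 'x" and l :: "'x \<Rightarrow> real"
    and H N :: nat and xt :: 'x and unom :: 'u
    and q :: "(nat \<Rightarrow> 'u) measure" and \<epsilon> \<beta> :: real
  assumes "H \<ge> 1"
    and "prob_space q"
    and "\<epsilon> \<in> {0<..<1}" and "\<beta> \<in> {0<..<1}"
    and "real N \<ge> 2 / \<epsilon> * (ln (1 / \<beta>) + 1)"
    and "{U \<in> space q. safety_indicator f l H (f xt unom) U = 1} \<in> sets q"
  shows "measure (PiM {..<N} (\<lambda>_. q))
           {Us \<in> space (PiM {..<N} (\<lambda>_. q)).
              filter_intervenes f l H N xt unom Us \<longrightarrow>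
              measure q {U \<in> space q. safety_indicator f l H (f xt unom) U = 1} \<le> \<epsilon>}
         \<ge> 1 - \<beta>"
proof -
  interpret q: prob_space q by (rule assms(2))
  define S where "S = {U \<in> space q. safety_indicator f l H (f xt unom) U = 1}"
  have "0 < ln (1 / \<beta>)" and "0 < \<epsilon>"
    using assms(3,4) by auto
  then have "ln (1 / \<beta>) \<le> \<epsilon> * card {..<N}"
    using assms(5) by (simp add: field_simps)
  moreover have "0 < 2 / \<epsilon> * (ln (1 / \<beta>) + 1)"
    using \<open>0 < ln (1 / \<beta>)\<close> \<open>0 < \<epsilon>\<close> by simp
  then have "N > 0"
    using assms(5) by simp
  then have "{Us \<in> space (PiM {..<N} (\<lambda>_. q)). filter_intervenes f l H N xt unom Us \<longrightarrow> q.prob S \<le> \<epsilon>}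
           = {Us \<in> space (PiM {..<N} (\<lambda>_. q)). (\<forall>i\<in>{..<N}. Us i \<notin> S) \<longrightarrow> q.prob S \<le> \<epsilon>}"
    by (auto simp: filter_intervenes_iff_no_safe_sample S_def space_PiM)
  ultimately show ?thesis
    using q.prob_all_samples_miss_imp_prob_le[where I = "{..<N}" and S = S] assms(4,6)
    by (simp add: S_def)
qed

end
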